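(* Let $T$ be a tiling of $\mathbb{R}^d$ and let $\Omega_T$ be its tiling space. For $T_1,T_2\in\Omega_T$ and $r>0$ define \[ d_r(T_1,T_2)=\inf\{\varepsilon>0\mid \text{there exists } u\in\mathbb{R}^d \text{ with } |u|<\varepsilon \text{ and } (T_1+u)\cap rD=T_2\cap rD\}, \] with $d_r(T_1,T_2)=\infty$ if no $u\in\mathbb{R}^d$ satisfies $(T_1+u)\cap rD=T_2\cap rD$. Then for all $T_1,T_2,T_3\in\Omega_T$: (i) $d_r(T_1,T_1)=0$ for all $r>0$; (ii) if $r_1\le r_2$ then $d_{r_1}(T_1,T_2)\le d_{r_2}(T_1,T_2)$, and if $d_r(T_1,T_2)<\varepsilon$ then there is $\delta>0$ with $d_{r+\delta}(T_1,T_2)<\varepsilon$; (iii) for $r_1,r_2,r_3>0$, if $d_{r_1+r_2}(T_1,T_2)<r_3$ and $d_{r_1+r_2+r_3}(T_2,T_3)<r_2$, then $d_{r_1}(T_1,T_3)\le d_{r_1+r_2}(T_1,T_2)+d_{r_1+r_2+r_3}(T_2,T_3)$.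
   Context: A tiling of $\mathbb{R}^d$ ($d\ge1$) is a collection $T$ of subsets of $\mathbb{R}^d$ (tiles) such that: each tile is a translate of one of finitely many subsets $\tau_1,\dots,\tau_n$ (the prototiles); each tile is homeomorphic to a closed $d$-disk; the union of the tiles is $\mathbb{R}^d$; distinct tiles have disjoint interiors. For $A\subset\mathbb{R}^d$, $T\cap A=\{t\in T\mid t\cap A\ne\emptyset\}$. For $x\in\mathbb{R}^d$, $T+x=\{t+x\mid t\in T\}$. $rD=\{x\in\mathbb{R}^d\mid |x|\le r\}$ and $B_\rho(0)$ is the open ball of radius $\rho$. On the orbit $\{T+x\mid x\in\mathbb{R}^d\}$ define the metric $d(T,T')$ as the infimum of the set of $\varepsilon>0$ for which there exist $u,v\in\mathbb{R}^d$ with $|u|,|v|<\varepsilon$ and $(T+u)\cap B_{1/\varepsilon}(0)=(T'+v)\cap B_{1/\varepsilon}(0)$, together with the number $1/\sqrt2$. The tiling space $\Omega_T$ is the metric completion of the orbit with respect to $d$; each element of $\Omega_T$ is regarded as a tiling of $\mathbb{R}^d$ whose tiles are translates of prototiles of $T$ (every patch of it appears in $T$). *)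

theory Defs
  imports "HOL-Analysis.Analysis" "HOL-Library.Extended_Real"
begin

text \<open>Tilings of R^d, modelled on a Euclidean space type 'a (d = DIM('a)).
  A tiling is a set of tiles (subsets of 'a).\<close>

definition translate_tiling :: "'a::euclidean_space set set \<Rightarrow> 'a \<Rightarrow> 'a set set" where
  "translate_tiling T x = (\<lambda>t. (\<lambda>y. y + x) ` t) ` T"

text \<open>T \<inter> A in the paper: tiles of T meeting A.\<close>
definition patch :: "'a set set \<Rightarrow> 'a set \<Rightarrow> 'a set set" where
  "patch T A = {t \<in> T. t \<inter> A \<noteq> {}}"

definition is_tiling :: "'a::euclidean_space set set \<Rightarrow> bool" where
  "is_tiling T \<longleftrightarrow>
     (\<exists>P. finite P \<and> (\<forall>t\<in>T. \<exists>p\<in>P. \<exists>x. t = (\<lambda>y. y + x) ` p))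
   \<and> (\<forall>t\<in>T. t homeomorphic (cball (0::'a) 1))
   \<and> \<Union>T = UNIV
   \<and> (\<forall>s\<in>T. \<forall>t\<in>T. s \<noteq> t \<longrightarrow> interior s \<inter> interior t = {})"

definition tiling_dist :: "'a::euclidean_space set set \<Rightarrow> 'a set set \<Rightarrow> real" where
  "tiling_dist T T' = Inf ({e. e > 0 \<and> (\<exists>u v. norm u < e \<and> norm v < e \<and>
        patch (translate_tiling T u) (ball 0 (1/e)) = patch (translate_tiling T' v) (ball 0 (1/e)))}
      \<union> {1 / sqrt 2})"

text \<open>Tiling space: tilings that are limits (w.r.t. d) of translates of T,
  i.e. the metric completion of the orbit, with elements regarded as tilings.\<close>
definition tiling_space :: "'a::euclidean_space set set \<Rightarrow> 'a set set set" where
  "tiling_space T = {T'. is_tiling T' \<and>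
      (\<exists>x :: nat \<Rightarrow> 'a. (\<lambda>n. tiling_dist (translate_tiling T (x n)) T') \<longlonglongrightarrow> 0)}"

text \<open>d_r, with value \<infinity> when no translation works (Inf {} = \<infinity> in ereal).\<close>
definition dist_r :: "real \<Rightarrow> 'a::euclidean_space set set \<Rightarrow> 'a set set \<Rightarrow> ereal" where
  "dist_r r T1 T2 = Inf {ereal e | e. e > 0 \<and> (\<exists>u. norm u < e \<and>
        patch (translate_tiling T1 u) (cball 0 r) = patch T2 (cball 0 r))}"

end

theory Submission
  imports Defs
begin

text \<open>A value \<open>d\<^sub>r(T\<^sub>1, T\<^sub>2) < c\<close> means exactly that some translation by a vector shorter
  than \<open>c\<close> makes \<open>T\<^sub>1\<close> agree with \<open>T\<^sub>2\<close> on \<open>rD\<close>. This gives (i) and the monotonicity in (ii)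
  at once, and (iii) by composing the two matching translations \<open>u\<close> and \<open>v\<close>: since
  \<open>|v| < r\<^sub>2\<close>, the ball \<open>r\<^sub>1D\<close> shifted by \<open>-v\<close> stays inside \<open>(r\<^sub>1 + r\<^sub>2)D\<close>.
  For the semicontinuity in (ii) we use that a tiling is locally finite (translates of one
  prototile have disjoint interiors, so their translation vectors are uniformly discrete).
  Only finitely many compact tiles meet \<open>(r + 1)D\<close>, and those missing \<open>rD\<close> still miss
  \<open>(r + \<delta>)D\<close> for small \<open>\<delta>\<close>; so a match on \<open>rD\<close> persists on \<open>(r + \<delta>)D\<close>.\<close>

lemma homeomorphic_cball_compact_interior:
  fixes t :: "'a::euclidean_space set"
  assumes "t homeomorphic cball (0::'a) 1"
  shows "compact t" and "interior t \<noteq> {}"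
proof -
  show "compact t" using assms homeomorphic_compactness compact_cball by blast
  have "interior t homeomorphic interior (cball (0::'a) 1)"
    by (rule homeomorphic_interiors_same_dimension[OF assms]) simp
  then show "interior t \<noteq> {}" by auto
qed

lemma interior_translation_right:
  "interior ((\<lambda>z. z + a) ` S) = (\<lambda>z. z + a) ` interior S" for S :: "'a::real_normed_vector set"
  using interior_translation[of a S] by (simp add: add.commute)

lemma uniform_discrete_translation_vectors:
  fixes p :: "'a::real_normed_vector set"
  assumes "interior p \<noteq> {}"
    and disjoint: "\<And>x y. x \<in> X \<Longrightarrow> y \<in> X \<Longrightarrow> x \<noteq> y \<Longrightarrow>
      interior ((\<lambda>z. z + x) ` p) \<inter> interior ((\<lambda>z. z + y) ` p) = {}"
  shows "uniform_discrete X"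
proof -
  obtain c \<rho> where "\<rho> > 0" and c: "ball c \<rho> \<subseteq> interior p"
    using assms(1) open_contains_ball open_interior by blast
  have "x = y" if "x \<in> X" "y \<in> X" "dist x y < \<rho>" for x y
  proof (rule ccontr)
    assume "x \<noteq> y"
    have "c + y - x \<in> ball c \<rho>"
      using \<open>dist x y < \<rho>\<close> by (simp add: dist_norm algebra_simps)
    then have "c + y \<in> interior ((\<lambda>z. z + x) ` p)"
      using c interior_translation_right by (force intro: rev_image_eqI[of "c + y - x"])
    moreover have "c + y \<in> interior ((\<lambda>z. z + y) ` p)"
      using c \<open>\<rho> > 0\<close> interior_translation_right by (force intro: rev_image_eqI[of c])
    ultimately show False using disjoint[OF that(1,2) \<open>x \<noteq> y\<close>] by blast
  qed
  then show ?thesis unfolding uniform_discrete_def using \<open>\<rho> > 0\<close> by blast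
qed

lemma finite_translates_meeting_bounded:
  fixes p B :: "'a::euclidean_space set"
  assumes "bounded p" "interior p \<noteq> {}" "bounded B"
    and "pairwise (\<lambda>s t. interior s \<inter> interior t = {}) S"
  shows "finite {t \<in> S. t \<inter> B \<noteq> {} \<and> (\<exists>x. t = (\<lambda>z. z + x) ` p)}"
proof -
  define tr where "tr x = (\<lambda>z. z + x) ` p" for x
  define X where "X = {x. tr x \<in> S \<and> tr x \<inter> B \<noteq> {}}"
  have translates: "{t \<in> S. t \<inter> B \<noteq> {} \<and> (\<exists>x. t = (\<lambda>z. z + x) ` p)} = tr ` X"
    unfolding X_def tr_def by auto
  \<comment> \<open>On \<open>Y\<close> distinct vectors give distinct tiles, which have disjoint interiors.\<close>
  obtain Y where "Y \<subseteq> X" "inj_on tr Y" and image_eq: "tr ` X = tr ` Y"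
    using subset_image_inj[of "tr ` X" tr X] by auto
  have "X \<subseteq> (\<lambda>(b, y). b - y) ` (B \<times> p)"
  proof
    fix x assume "x \<in> X"
    then obtain y where "y \<in> p" "y + x \<in> B" unfolding X_def tr_def by blast
    then show "x \<in> (\<lambda>(b, y). b - y) ` (B \<times> p)" by (force intro: rev_image_eqI[of "(y + x, y)"])
  qed
  then have "bounded Y"
    using bounded_minus[OF assms(3,1)] \<open>Y \<subseteq> X\<close> bounded_subset by blast
  moreover have "uniform_discrete Y"
  proof (rule uniform_discrete_translation_vectors[OF assms(2)])
    fix x y assume "x \<in> Y" "y \<in> Y" "x \<noteq> y"
    then have "tr x \<noteq> tr y" "tr x \<in> S" "tr y \<in> S"
      using \<open>inj_on tr Y\<close> \<open>Y \<subseteq> X\<close> unfolding inj_on_def X_def by auto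
    then show "interior ((\<lambda>z. z + x) ` p) \<inter> interior ((\<lambda>z. z + y) ` p) = {}"
      using pairwiseD[OF assms(4), of "tr x" "tr y"] by (simp add: tr_def)
  qed
  ultimately have "finite Y" using uniform_discrete_finite_iff by blast
  then show ?thesis unfolding translates image_eq by simp
qed

lemma is_tilingE:
  fixes S :: "'a::euclidean_space set set"
  assumes "is_tiling S"
  obtains P where "finite P" "\<forall>t\<in>S. \<exists>p\<in>P. \<exists>x. t = (\<lambda>z. z + x) ` p"
    and "\<forall>t\<in>S. t homeomorphic cball (0::'a) 1"
    and "pairwise (\<lambda>s t. interior s \<inter> interior t = {}) S"
  using assms unfolding is_tiling_def pairwise_def by (elim conjE exE) metis

lemma tiling_compact_tile:
  fixes S :: "'a::euclidean_space set set"
  assumes "is_tiling S" "t \<in> S"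
  shows "compact t"
  using assms homeomorphic_cball_compact_interior(1) by (metis is_tilingE)

lemma tiling_locally_finite:
  fixes S :: "'a::euclidean_space set set"
  assumes "is_tiling S" "bounded B"
  shows "finite (patch S B)"
proof -
  obtain P where "finite P" and P: "\<forall>t\<in>S. \<exists>p\<in>P. \<exists>x. t = (\<lambda>z. z + x) ` p"
    and tiles: "\<forall>t\<in>S. t homeomorphic cball (0::'a) 1"
    and disjoint: "pairwise (\<lambda>s t. interior s \<inter> interior t = {}) S"
    using is_tilingE[OF assms(1)] by blast
  define Q where "Q p = {t \<in> S. t \<inter> B \<noteq> {} \<and> (\<exists>x. t = (\<lambda>z. z + x) ` p)}" for p
  have "finite (Q p)" for p
  proof (cases "\<exists>x. (\<lambda>z. z + x) ` p \<in> S")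
    case True
    then obtain x where "(\<lambda>z. z + x) ` p \<in> S" by blast
    then have "compact ((\<lambda>z. z + x) ` p)" "interior ((\<lambda>z. z + x) ` p) \<noteq> {}"
      using homeomorphic_cball_compact_interior tiles by blast+
    then have "bounded ((\<lambda>z. z - x) ` (\<lambda>z. z + x) ` p)" "interior p \<noteq> {}"
      by (simp_all add: bounded_translation_minus compact_imp_bounded interior_translation_right)
    moreover have "(\<lambda>z. z - x) ` (\<lambda>z. z + x) ` p = p"
      by (simp add: image_image)
    ultimately show ?thesis
      unfolding Q_def by (intro finite_translates_meeting_bounded[OF _ _ assms(2) disjoint]) simp_all
  next
    case False
    then have "Q p = {}" unfolding Q_def by blast
    then show ?thesis by simp
  qed
  moreover have "patch S B \<subseteq> (\<Union>p\<in>P. Q p)"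
  proof
    fix t assume "t \<in> patch S B"
    then have "t \<in> S" "t \<inter> B \<noteq> {}" unfolding patch_def by auto
    moreover obtain p where "p \<in> P" "\<exists>x. t = (\<lambda>z. z + x) ` p"
      using bspec[OF P \<open>t \<in> S\<close>] ..
    ultimately show "t \<in> (\<Union>p\<in>P. Q p)" unfolding Q_def by auto
  qed
  ultimately show ?thesis
    using \<open>finite P\<close> by (meson finite_UN_I finite_subset)
qed

lemma patch_mono: "A \<subseteq> B \<Longrightarrow> patch S A \<subseteq> patch S B"
  unfolding patch_def by blast

lemma patch_eq_subset: "patch S B = patch S' B \<Longrightarrow> A \<subseteq> B \<Longrightarrow> patch S A = patch S' A"
  unfolding patch_def by (simp add: set_eq_iff) blast

lemma translate_tiling_0 [simp]: "translate_tiling S 0 = S"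
  unfolding translate_tiling_def by simp

lemma translate_tiling_translate_tiling [simp]:
  "translate_tiling (translate_tiling S u) v = translate_tiling S (u + v)"
  unfolding translate_tiling_def image_image by (simp add: add.assoc)

lemma patch_translate_tiling:
  "patch (translate_tiling S v) A = translate_tiling (patch S ((\<lambda>y. y - v) ` A)) v"
proof -
  have "(\<lambda>y. y - v) ` A = {z. z + v \<in> A}"
    by (auto simp: image_iff) (metis add_diff_cancel)
  then have "(\<lambda>y. y + v) ` t \<inter> A \<noteq> {} \<longleftrightarrow> t \<inter> (\<lambda>y. y - v) ` A \<noteq> {}" for t
    by auto
  then show ?thesis unfolding patch_def translate_tiling_def by (auto simp del: image_is_empty)
qed

lemma tiling_finite_patch_translate:
  fixes S :: "'a::euclidean_space set set"
  assumes "is_tiling S" "bounded A"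
  shows "finite (patch (translate_tiling S u) A)"
proof -
  have "finite (patch S ((\<lambda>y. y - u) ` A))"
    using tiling_locally_finite[OF assms(1) bounded_translation_minus[OF assms(2)]] .
  then show ?thesis unfolding patch_translate_tiling by (simp add: translate_tiling_def)
qed

lemma tiling_compact_translate:
  fixes S :: "'a::euclidean_space set set"
  assumes "is_tiling S" "t \<in> translate_tiling S u"
  shows "compact t"
proof -
  obtain t0 where "t0 \<in> S" "t = (\<lambda>y. y + u) ` t0"
    using assms(2) unfolding translate_tiling_def by blast
  then show ?thesis
    using compact_translation[OF tiling_compact_tile[OF assms(1)], of t0 u]
    by (simp add: add.commute)
qed

lemma eventually_disjoint_cball:
  fixes t :: "'a::{real_normed_vector, heine_borel} set"
  assumes "closed t" "t \<inter> cball 0 r = {}"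
  shows "\<forall>\<^sub>F \<delta> in at_right 0. t \<inter> cball 0 (r + \<delta>) = {}"
proof (cases "t = {}")
  case False
  then obtain y where "y \<in> t" and y_min: "\<And>z. z \<in> t \<Longrightarrow> norm y \<le> norm z"
    using distance_attains_inf[OF assms(1) False, of 0] by auto
  then have "norm y > r" using assms(2) by auto
  then have "\<forall>\<^sub>F \<delta> in at_right 0. \<delta> < norm y - r"
    unfolding eventually_at_right_field by (intro exI[of _ "norm y - r"]) auto
  then show ?thesis
  proof eventually_elim
    case (elim \<delta>)
    show ?case using y_min elim by fastforce
  qed
qed simp

lemma eventually_patch_cball_eq:
  fixes S :: "'a::{real_normed_vector, heine_borel} set set"
  assumes "\<forall>t\<in>S. closed t" "finite (patch S (cball 0 (r + 1)))"
  shows "\<forall>\<^sub>F \<delta> in at_right 0. patch S (cball 0 (r + \<delta>)) = patch S (cball 0 r)"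
proof -
  define F where "F = patch S (cball 0 (r + 1)) - patch S (cball 0 r)"
  have "\<forall>\<^sub>F \<delta> in at_right 0. \<forall>t\<in>F. t \<inter> cball 0 (r + \<delta>) = {}"
    using assms by (intro eventually_ball_finite) (auto simp: F_def patch_def intro: eventually_disjoint_cball)
  moreover have "\<forall>\<^sub>F \<delta> in at_right 0. 0 < \<delta> \<and> \<delta> < (1::real)"
    by (auto simp: eventually_at_right_field intro: exI[of _ 1])
  ultimately show ?thesis
  proof eventually_elim
    case (elim \<delta>)
    have "patch S (cball 0 (r + \<delta>)) \<subseteq> patch S (cball 0 (r + 1))"
      using elim by (intro patch_mono) auto
    then have "patch S (cball 0 (r + \<delta>)) \<subseteq> patch S (cball 0 r)"
      using elim unfolding F_def patch_def by blast
    moreover have "patch S (cball 0 r) \<subseteq> patch S (cball 0 (r + \<delta>))"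
      using elim by (intro patch_mono) auto
    ultimately show ?case by (rule antisym)
  qed
qed

lemma dist_r_nonneg: "0 \<le> dist_r r A B"
  unfolding dist_r_def by (rule Inf_greatest) auto

lemma dist_r_le_norm:
  assumes "patch (translate_tiling A u) (cball 0 r) = patch B (cball 0 r)"
  shows "dist_r r A B \<le> ereal (norm u)"
proof (rule ereal_le_epsilon2)
  fix \<epsilon> :: real assume "0 < \<epsilon>"
  then have "norm u + \<epsilon> > 0" "norm u < norm u + \<epsilon>" by (auto intro: add_nonneg_pos)
  then have "ereal (norm u + \<epsilon>) \<in> {ereal e | e. e > 0 \<and> (\<exists>u. norm u < e \<and>
      patch (translate_tiling A u) (cball 0 r) = patch B (cball 0 r))}"
    using assms by blast
  then show "dist_r r A B \<le> ereal (norm u) + ereal \<epsilon>"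
    unfolding dist_r_def by (simp add: Inf_lower)
qed

lemma dist_r_less_iff:
  "dist_r r A B < ereal c \<longleftrightarrow>
    (\<exists>u. norm u < c \<and> patch (translate_tiling A u) (cball 0 r) = patch B (cball 0 r))"
proof
  assume "dist_r r A B < ereal c"
  then show "\<exists>u. norm u < c \<and> patch (translate_tiling A u) (cball 0 r) = patch B (cball 0 r)"
    unfolding dist_r_def Inf_less_iff by force
next
  assume "\<exists>u. norm u < c \<and> patch (translate_tiling A u) (cball 0 r) = patch B (cball 0 r)"
  then obtain u where "norm u < c" "patch (translate_tiling A u) (cball 0 r) = patch B (cball 0 r)"
    by blast
  then have "dist_r r A B \<le> ereal (norm u)" by (intro dist_r_le_norm)
  also have "\<dots> < ereal c" using \<open>norm u < c\<close> by simp
  finally show "dist_r r A B < ereal c" .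
qed

lemma dist_r_self: "dist_r r A A = 0"
  using dist_r_le_norm[of A 0 r A] dist_r_nonneg[of r A A] by (simp add: zero_ereal_def)

lemma dist_r_mono:
  assumes "r1 \<le> r2"
  shows "dist_r r1 A B \<le> dist_r r2 A B"
proof -
  have "cball 0 r1 \<subseteq> cball 0 r2" using assms by auto
  then show ?thesis
    unfolding dist_r_def by (intro Inf_superset_mono) (blast dest: patch_eq_subset)
qed

lemma eventually_dist_r_less:
  fixes A B :: "'a::euclidean_space set set"
  assumes "is_tiling A" "is_tiling B" "dist_r r A B < ereal e"
  shows "\<forall>\<^sub>F \<delta> in at_right 0. dist_r (r + \<delta>) A B < ereal e"
proof -
  obtain u where "norm u < e"
    and match: "patch (translate_tiling A u) (cball 0 r) = patch B (cball 0 r)"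
    using assms(3) dist_r_less_iff by blast
  have "\<forall>\<^sub>F \<delta> in at_right 0.
      patch (translate_tiling A u) (cball 0 (r + \<delta>)) = patch (translate_tiling A u) (cball 0 r)"
    using tiling_compact_translate[OF assms(1)] tiling_finite_patch_translate[OF assms(1)]
    by (intro eventually_patch_cball_eq) (auto intro: compact_imp_closed)
  moreover have "\<forall>\<^sub>F \<delta> in at_right 0. patch B (cball 0 (r + \<delta>)) = patch B (cball 0 r)"
    using tiling_compact_tile[OF assms(2)] tiling_locally_finite[OF assms(2)]
    by (intro eventually_patch_cball_eq) (auto intro: compact_imp_closed)
  ultimately show ?thesis
  proof eventually_elim
    case (elim \<delta>)
    then have "patch (translate_tiling A u) (cball 0 (r + \<delta>)) = patch B (cball 0 (r + \<delta>))"
      using match by simp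
    then show ?case using \<open>norm u < e\<close> dist_r_less_iff by blast
  qed
qed

lemma patch_match_compose:
  assumes "patch (translate_tiling T1 u) B = patch T2 B" "(\<lambda>y. y - v) ` A \<subseteq> B"
    and "patch (translate_tiling T2 v) C = patch T3 C" "A \<subseteq> C"
  shows "patch (translate_tiling T1 (u + v)) A = patch T3 A"
proof -
  have "patch (translate_tiling T1 (u + v)) A =
      translate_tiling (patch (translate_tiling T1 u) ((\<lambda>y. y - v) ` A)) v"
    using patch_translate_tiling[of "translate_tiling T1 u" v A] by simp
  also have "\<dots> = translate_tiling (patch T2 ((\<lambda>y. y - v) ` A)) v"
    using patch_eq_subset[OF assms(1,2)] by simp
  also have "\<dots> = patch (translate_tiling T2 v) A"
    by (simp add: patch_translate_tiling)
  also have "\<dots> = patch T3 A"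
    using patch_eq_subset[OF assms(3,4)] .
  finally show ?thesis .
qed

lemma dist_r_triangle:
  assumes "dist_r (r1 + r2) T1 T2 < ereal r3" and "dist_r (r1 + r2 + r3) T2 T3 < ereal r2"
  shows "dist_r r1 T1 T3 \<le> dist_r (r1 + r2) T1 T2 + dist_r (r1 + r2 + r3) T2 T3"
proof -
  obtain p where p: "dist_r (r1 + r2) T1 T2 = ereal p"
    using assms(1) dist_r_nonneg[of "r1 + r2" T1 T2] by (cases "dist_r (r1 + r2) T1 T2") auto
  obtain q where q: "dist_r (r1 + r2 + r3) T2 T3 = ereal q"
    using assms(2) dist_r_nonneg[of "r1 + r2 + r3" T2 T3] by (cases "dist_r (r1 + r2 + r3) T2 T3") auto
  have "0 \<le> p" "p < r3"
    using assms(1) dist_r_nonneg[of "r1 + r2" T1 T2] p by simp_all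
  have "0 \<le> q" "q < r2"
    using assms(2) dist_r_nonneg[of "r1 + r2 + r3" T2 T3] q by simp_all
  show ?thesis unfolding p q
  proof (rule ereal_le_epsilon2)
    fix \<epsilon> :: real assume "0 < \<epsilon>"
    obtain u where u: "norm u < p + \<epsilon> / 2"
      and match_u: "patch (translate_tiling T1 u) (cball 0 (r1 + r2)) = patch T2 (cball 0 (r1 + r2))"
      using dist_r_less_iff[of "r1 + r2" T1 T2 "p + \<epsilon> / 2"] p \<open>0 < \<epsilon>\<close> by auto
    obtain v where v: "norm v < min (q + \<epsilon> / 2) r2"
      and match_v: "patch (translate_tiling T2 v) (cball 0 (r1 + r2 + r3)) = patch T3 (cball 0 (r1 + r2 + r3))"
      using dist_r_less_iff[of "r1 + r2 + r3" T2 T3 "min (q + \<epsilon> / 2) r2"] q \<open>0 < \<epsilon>\<close> \<open>q < r2\<close>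
      by auto
    have "(\<lambda>y. y - v) ` cball 0 r1 \<subseteq> cball 0 (r1 + r2)"
      using v by (auto intro!: norm_triangle_le_diff)
    moreover have "cball 0 r1 \<subseteq> cball 0 (r1 + r2 + r3)"
      using \<open>0 \<le> p\<close> \<open>p < r3\<close> \<open>0 \<le> q\<close> \<open>q < r2\<close> by auto
    ultimately have "patch (translate_tiling T1 (u + v)) (cball 0 r1) = patch T3 (cball 0 r1)"
      by (rule patch_match_compose[OF match_u _ match_v])
    then have "dist_r r1 T1 T3 \<le> ereal (norm (u + v))"
      by (rule dist_r_le_norm)
    also have "\<dots> \<le> ereal p + ereal q + ereal \<epsilon>"
      using u v norm_triangle_ineq[of u v] by simp
    finally show "dist_r r1 T1 T3 \<le> ereal p + ereal q + ereal \<epsilon>" .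
  qed
qed

theorem proposition3p4:
  fixes T T1 T2 T3 :: "'a::euclidean_space set set"
  assumes "is_tiling T"
    and "T1 \<in> tiling_space T" and "T2 \<in> tiling_space T" and "T3 \<in> tiling_space T"
  shows "(\<forall>r>0. dist_r r T1 T1 = 0)
    \<and> (\<forall>r1 r2. 0 < r1 \<and> r1 \<le> r2 \<longrightarrow> dist_r r1 T1 T2 \<le> dist_r r2 T1 T2)
    \<and> (\<forall>r e. r > 0 \<and> dist_r r T1 T2 < ereal e \<longrightarrow>
          (\<exists>\<delta>>0. dist_r (r + \<delta>) T1 T2 < ereal e))
    \<and> (\<forall>r1 r2 r3. r1 > 0 \<and> r2 > 0 \<and> r3 > 0 \<and>
          dist_r (r1 + r2) T1 T2 < ereal r3 \<and> dist_r (r1 + r2 + r3) T2 T3 < ereal r2 \<longrightarrow>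
          dist_r r1 T1 T3 \<le> dist_r (r1 + r2) T1 T2 + dist_r (r1 + r2 + r3) T2 T3)"
proof -
  have tilings: "is_tiling T1" "is_tiling T2"
    using assms(2,3) unfolding tiling_space_def by auto
  have upper: "\<exists>\<delta>>0. dist_r (r + \<delta>) T1 T2 < ereal e" if "dist_r r T1 T2 < ereal e" for r e
  proof -
    have "\<forall>\<^sub>F \<delta> in at_right 0. 0 < \<delta> \<and> dist_r (r + \<delta>) T1 T2 < ereal e"
      using eventually_at_right_less eventually_dist_r_less[OF tilings that] by (rule eventually_conj)
    then show ?thesis
      using eventually_happens'[OF trivial_limit_at_right_real] by blast
  qed
  show ?thesis
    by (intro conjI allI impI) (simp_all add: dist_r_self dist_r_mono upper dist_r_triangle)
qed

end
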